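(* Let $W\subset D_2(H)$ be the subgroup generated by all elements $T(a_i,b_j;b_k,b_l)$, $1\le i,j,k,l\le g$, and let $N:=\operatorname{Ker}(\operatorname{Tr}^A|_W:W\to S^2(H'))$. For indices set $①_{i,j,k,l}:=T(a_i,b_j;b_k,b_l)$, $②_{i,j,k}:=T(a_i,b_j;b_k,b_i)$, $③_{i,k,l}:=T(a_i,b_i;b_k,b_l)$, $④_{i,k}:=T(a_i,b_i;b_k,b_i)$, always with $i$ different from $j,k,l$. Then $N$ is generated by all elements $①_{i,j,k,l}$, all elements $③_{i,k,l}$, and the elements $$②_{i,j,j}-②_{i',j,j},\quad ②_{i,j,k}-②_{i',j,k},\quad ②_{i,j,k}-②_{i',k,j},\quad ②_{i,j,k}-④_{j,k},\quad ②_{i,j,k}-④_{k,j},\quad ④_{i,k}-④_{k,i},$$ where $i,i'\notin\{j,k\}$ and $j\ne k$ (and $i\ne k$ in $④_{i,k}$).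
   Context: Let $g\ge 2$, $\Sigma_{g,1}$ a compact connected oriented surface of genus $g$ with one boundary component, $H=H_1(\Sigma_{g,1};\mathbb Z)$ with intersection form $\omega$, $\mathcal L(H)$ the free Lie ring on $H$ embedded in $T(H)$ via $[x,y]=x\otimes y-y\otimes x$, and $D_2(H):=\ker(H\otimes\mathcal L_3(H)\to\mathcal L_4(H),\ h\otimes u\mapsto[h,u])$. For $a,b,c,d\in H$, $T(a,b;c,d):=a\otimes[b,[c,d]]+b\otimes[[c,d],a]+c\otimes[d,[a,b]]+d\otimes[[a,b],c]\in D_2(H)$. Let $V_g$ be a handlebody with $\Sigma_{g,1}\subset\partial V_g$; $A:=\ker(H\to H_1(V_g;\mathbb Z))$, $H':=H/A$, $x'$ the class of $x\in H$; fix a symplectic basis $(a_1,\dots,a_g,b_1,\dots,b_g)$ of $H$ ($\omega(a_i,b_j)=\delta_{ij}$, $\omega(a_i,a_j)=\omega(b_i,b_j)=0$) with $a_i\in A$. $\omega':A\times H'\to\mathbb Z$, $\omega'(a,x')=\omega(a,x)$. With $p:H\otimes\mathcal L_3(H)\to H\otimes\mathcal L_3(H')$ induced by $H\to H'$ and $K_A:=\ker(D_2(H)\to D_2(H'))$ (so $p(K_A)\subset A\otimes\mathcal L_3(H')$; all elements $T(a_i,\cdot;\cdot,\cdot)$ above lie in $K_A$), $\operatorname{Tr}^A:K_A\to S^2(H')$ is the composite of $p$, $A\otimes\mathcal L_3(H')\subset A\otimes H'^{\otimes3}$, the contraction $a\otimes x\otimes y\otimes z\mapsto\omega'(a,x)\,y\otimes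 z$, and projection to $S^2(H')$. *)

theory Defs
  imports Main
begin

text \<open>Coordinates: H = H_1(Sigma_{g,1}) is free abelian on the symplectic basis
  a_1..a_g, b_1..b_g (letters La i, Lb i, 1 <= i <= g).  The tensor algebra T(H) is
  modelled as integer-valued functions on words of letters (coefficient of each
  basis tensor); H' = H/A has basis b_1',...,b_g' (images of the Lb i).\<close>

datatype letter = La nat | Lb nat

type_synonym tensor = "letter list \<Rightarrow> int"

definition tadd :: "tensor \<Rightarrow> tensor \<Rightarrow> tensor" where
  "tadd x y = (\<lambda>w. x w + y w)"

definition tsub :: "tensor \<Rightarrow> tensor \<Rightarrow> tensor" where
  "tsub x y = (\<lambda>w. x w - y w)"

definition tmul :: "tensor \<Rightarrow> tensor \<Rightarrow> tensor" where
  "tmul x y = (\<lambda>w. \<Sum>n\<le>length w. x (take n w) * y (drop n w))"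

definition gen :: "letter \<Rightarrow> tensor" where
  "gen l = (\<lambda>w. if w = [l] then 1 else 0)"

definition lie :: "tensor \<Rightarrow> tensor \<Rightarrow> tensor" where
  "lie x y = tsub (tmul x y) (tmul y x)"

definition T4 :: "letter \<Rightarrow> letter \<Rightarrow> letter \<Rightarrow> letter \<Rightarrow> tensor" where
  "T4 a b c d =
     tadd (tadd (tmul (gen a) (lie (gen b) (lie (gen c) (gen d))))
                (tmul (gen b) (lie (lie (gen c) (gen d)) (gen a))))
          (tadd (tmul (gen c) (lie (gen d) (lie (gen a) (gen b))))
                (tmul (gen d) (lie (lie (gen a) (gen b)) (gen c))))"

inductive_set zspan :: "tensor set \<Rightarrow> tensor set" for S :: "tensor set" where
  zero: "(\<lambda>_. 0) \<in> zspan S"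
| add: "x \<in> S \<Longrightarrow> y \<in> zspan S \<Longrightarrow> tadd y x \<in> zspan S"
| sub: "x \<in> S \<Longrightarrow> y \<in> zspan S \<Longrightarrow> tsub y x \<in> zspan S"

definition W :: "nat \<Rightarrow> tensor set" where
  "W g = zspan {T4 (La i) (Lb j) (Lb k) (Lb l) | i j k l.
                 i \<in> {1..g} \<and> j \<in> {1..g} \<and> k \<in> {1..g} \<and> l \<in> {1..g}}"

fun omega :: "letter \<Rightarrow> letter \<Rightarrow> int" where
  "omega (La i) (Lb j) = (if i = j then 1 else 0)"
| "omega (Lb i) (La j) = (if i = j then -1 else 0)"
| "omega _ _ = 0"

definition letters :: "nat \<Rightarrow> letter set" where
  "letters g = La ` {1..g} \<union> Lb ` {1..g}"

text \<open>Composite of p (positions 2-4 projected to H', i.e. a's killed, b's kept) and the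
  contraction h (x) x' (x) y' (x) z' |-> omega(h,x) y' (x) z': result in H'(x)H',
  as coefficient of b_k'(x)b_l'.\<close>
definition contr :: "nat \<Rightarrow> tensor \<Rightarrow> nat \<Rightarrow> nat \<Rightarrow> int" where
  "contr g x k l = (\<Sum>h\<in>letters g. \<Sum>j\<in>{1..g}. omega h (Lb j) * x [h, Lb j, Lb k, Lb l])"

text \<open>Projection H'(x)H' -> S^2(H') in the monomial basis b_k' b_l' (k,l unordered).\<close>
definition sym2 :: "(nat \<Rightarrow> nat \<Rightarrow> int) \<Rightarrow> nat \<Rightarrow> nat \<Rightarrow> int" where
  "sym2 t k l = (if k = l then t k k else t k l + t l k)"

definition trA :: "nat \<Rightarrow> tensor \<Rightarrow> nat \<Rightarrow> nat \<Rightarrow> int" where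
  "trA g x = (\<lambda>k l. if k \<in> {1..g} \<and> l \<in> {1..g} then sym2 (contr g x) k l else 0)"

end

theory Submission
  imports Defs
begin

text \<open>By the explicit formula Tr^A T(a_i,b_j;b_k,b_l) = \<delta>_il b_k'b_j' - \<delta>_ik b_l'b_j',
  every monomial b_m'b_n' (m \<le> n) is the trace of a single generator of W: of (4)_{m,n} if
  m < n, and of (2)_{i,m,m} for any i \<noteq> m (here g \<ge> 2 is used).  Sending x to the
  corresponding combination of these generators gives an additive map L on W with
  Tr^A (L x) = Tr^A x, and L x = 0 whenever Tr^A x = 0.  It therefore suffices to show that
  s - L s lies in the span of the listed elements for every generator s = T(a_i,b_j;b_k,b_l)
  of W.  If i \<notin> {k, l} then L s = 0 and s is itself of type (1) or (3).  If i = l then s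
  is (2)_{i,j,k} or (4)_{i,k}, and s - L s is zero or one of the differences (2) - (2),
  (2) - (4), (4) - (4); the case i = k reduces to this by T(a,b;d,c) = -T(a,b;c,d).
  Conversely the listed elements lie in W and have trace zero.\<close>

lemma tmul_gen_Cons: "tmul (gen a) y (h # t) = (if h = a then y t else 0)"
proof -
  have "tmul (gen a) y (h # t) = (\<Sum>n\<le>Suc (length t). gen a (take n (h # t)) * y (drop n (h # t)))"
    by (simp add: tmul_def)
  also have "\<dots> = gen a [] * y (h # t)
      + (\<Sum>n\<le>length t. gen a (take (Suc n) (h # t)) * y (drop (Suc n) (h # t)))"
    by (subst sum.atMost_Suc_shift) simp
  also have "(\<Sum>n\<le>length t. gen a (take (Suc n) (h # t)) * y (drop (Suc n) (h # t)))
      = (\<Sum>n\<le>length t. if n = 0 then gen a [h] * y t else 0)"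
    by (rule sum.cong) (auto simp: gen_def)
  finally show ?thesis by (simp add: gen_def)
qed

lemma tmul_gen_snoc: "tmul x (gen a) (w @ [h]) = (if h = a then x w else 0)"
proof -
  have "tmul x (gen a) (w @ [h])
      = (\<Sum>n<Suc (Suc (length w)). x (take n (w @ [h])) * gen a (drop n (w @ [h])))"
    by (simp add: tmul_def atMost_atLeast0 lessThan_Suc_atMost)
  also have "\<dots> = (\<Sum>n<length w. x (take n (w @ [h])) * gen a (drop n (w @ [h])))
      + x w * gen a [h] + x (w @ [h]) * gen a []"
    by simp
  also have "(\<Sum>n<length w. x (take n (w @ [h])) * gen a (drop n (w @ [h]))) = 0"
    by (rule sum.neutral) (auto simp: gen_def)
  finally show ?thesis by (simp add: gen_def)
qed

lemma tmul_gen_gen: "tmul (gen b) (gen c) w = (if w = [b, c] then 1 else 0)"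
proof (cases w)
  case Nil
  then show ?thesis by (simp add: tmul_def gen_def)
next
  case (Cons h t)
  then show ?thesis by (simp add: tmul_gen_Cons) (auto simp: gen_def)
qed

lemma lie_gen_gen: "lie (gen b) (gen c) w = (if w = [b, c] then 1 else 0) - (if w = [c, b] then 1 else 0)"
  by (simp add: lie_def tsub_def tmul_gen_gen)

lemma lie_gen_lie_gen_gen:
  "lie (gen b) (lie (gen c) (gen d)) [x, y, z] =
     (if [x, y, z] = [b, c, d] then 1 else 0) - (if [x, y, z] = [b, d, c] then 1 else 0)
   - (if [x, y, z] = [c, d, b] then 1 else 0) + (if [x, y, z] = [d, c, b] then 1 else 0)"
proof -
  have "tmul (lie (gen c) (gen d)) (gen b) [x, y, z] = (if z = b then lie (gen c) (gen d) [x, y] else 0)"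
    using tmul_gen_snoc[of "lie (gen c) (gen d)" b "[x, y]" z] by simp
  then have "lie (gen b) (lie (gen c) (gen d)) [x, y, z] =
      (if x = b then lie (gen c) (gen d) [y, z] else 0) - (if z = b then lie (gen c) (gen d) [x, y] else 0)"
    by (simp add: lie_def[of "gen b"] tsub_def tmul_gen_Cons)
  then show ?thesis by (simp add: lie_gen_gen)
qed

lemma T4_at_contraction_word:
  "T4 (La i) (Lb j) (Lb k) (Lb l) [La q, Lb q, Lb m, Lb n] =
     (if i = q then (if [q, m, n] = [j, k, l] then 1 else 0) - (if [q, m, n] = [j, l, k] then 1 else 0)
        - (if [q, m, n] = [k, l, j] then 1 else 0) + (if [q, m, n] = [l, k, j] then 1 else 0)
      else 0)"
  unfolding T4_def tadd_def tmul_gen_Cons lie_gen_lie_gen_gen by simp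

lemma contr_eq_sum: "contr g x m n = (\<Sum>q\<in>{1..g}. x [La q, Lb q, Lb m, Lb n])"
proof -
  have delta_mult: "(if c then 1 else 0) * y = (if c then y else 0)" for c and y :: int
    by simp
  have "contr g x m n = (\<Sum>h\<in>La ` {1..g}. \<Sum>j\<in>{1..g}. omega h (Lb j) * x [h, Lb j, Lb m, Lb n])
      + (\<Sum>h\<in>Lb ` {1..g}. \<Sum>j\<in>{1..g}. omega h (Lb j) * x [h, Lb j, Lb m, Lb n])"
    unfolding contr_def letters_def by (rule sum.union_disjoint) auto
  also have "(\<Sum>h\<in>Lb ` {1..g}. \<Sum>j\<in>{1..g}. omega h (Lb j) * x [h, Lb j, Lb m, Lb n]) = 0"
    by (rule sum.neutral) auto
  also have "(\<Sum>h\<in>La ` {1..g}. \<Sum>j\<in>{1..g}. omega h (Lb j) * x [h, Lb j, Lb m, Lb n])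
      = (\<Sum>q\<in>{1..g}. \<Sum>j\<in>{1..g}. if q = j then x [La q, Lb j, Lb m, Lb n] else 0)"
    by (subst sum.reindex) (auto simp: inj_on_def delta_mult intro!: sum.cong)
  finally show ?thesis by (simp add: sum.delta)
qed

text \<open>unit2 p q is b_p' \<otimes> b_q' in H' \<otimes> H', so sym2 (unit2 p q) is the monomial b_p'b_q'.\<close>

definition unit2 :: "nat \<Rightarrow> nat \<Rightarrow> nat \<Rightarrow> nat \<Rightarrow> int" where
  "unit2 p q = (\<lambda>m n. if m = p \<and> n = q then 1 else 0)"

lemma sym2_unit2_commute: "sym2 (unit2 p q) = sym2 (unit2 q p)"
  by (auto simp: sym2_def unit2_def fun_eq_iff)

lemma contr_T4:
  assumes "i \<in> {1..g}"
  shows "contr g (T4 (La i) (Lb j) (Lb k) (Lb l)) =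
    (\<lambda>m n. (if i = j then unit2 k l m n - unit2 l k m n else 0)
      - (if i = k then unit2 l j m n else 0) + (if i = l then unit2 k j m n else 0))"
proof (intro ext)
  fix m n
  have "contr g (T4 (La i) (Lb j) (Lb k) (Lb l)) m n =
      (if [i, m, n] = [j, k, l] then 1 else 0) - (if [i, m, n] = [j, l, k] then 1 else 0)
    - (if [i, m, n] = [k, l, j] then 1 else 0) + (if [i, m, n] = [l, k, j] then 1 else 0)"
    unfolding contr_eq_sum T4_at_contraction_word sum.delta' using assms by simp
  then show "contr g (T4 (La i) (Lb j) (Lb k) (Lb l)) m n =
      (if i = j then unit2 k l m n - unit2 l k m n else 0)
      - (if i = k then unit2 l j m n else 0) + (if i = l then unit2 k j m n else 0)"
    by (simp add: unit2_def)
qed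

lemma trA_T4:
  assumes "i \<in> {1..g}"
  shows "trA g (T4 (La i) (Lb j) (Lb k) (Lb l)) =
    (\<lambda>m n. if m \<in> {1..g} \<and> n \<in> {1..g}
      then (if i = l then sym2 (unit2 k j) m n else 0) - (if i = k then sym2 (unit2 l j) m n else 0)
      else 0)"
proof (intro ext)
  fix m n
  have "sym2 (contr g (T4 (La i) (Lb j) (Lb k) (Lb l))) m n =
      (if i = j then sym2 (unit2 k l) m n - sym2 (unit2 l k) m n else 0)
      - (if i = k then sym2 (unit2 l j) m n else 0) + (if i = l then sym2 (unit2 k j) m n else 0)"
    unfolding contr_T4[OF assms] sym2_def by auto
  then show "trA g (T4 (La i) (Lb j) (Lb k) (Lb l)) m n =
      (if m \<in> {1..g} \<and> n \<in> {1..g}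
       then (if i = l then sym2 (unit2 k j) m n else 0) - (if i = k then sym2 (unit2 l j) m n else 0)
       else 0)"
    by (simp add: trA_def sym2_unit2_commute[of k l])
qed

lemma contr_tadd: "contr g (tadd x y) m n = contr g x m n + contr g y m n"
  by (simp add: contr_eq_sum tadd_def sum.distrib)

lemma contr_tsub: "contr g (tsub x y) m n = contr g x m n - contr g y m n"
  by (simp add: contr_eq_sum tsub_def sum_subtractf)

lemma trA_tadd: "trA g (tadd x y) = (\<lambda>m n. trA g x m n + trA g y m n)"
proof (intro ext)
  fix m n
  show "trA g (tadd x y) m n = trA g x m n + trA g y m n"
    unfolding trA_def sym2_def contr_tadd by (cases "m = n") simp_all
qed

lemma trA_tsub: "trA g (tsub x y) = (\<lambda>m n. trA g x m n - trA g y m n)"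
  by (simp add: trA_def sym2_def contr_tsub fun_eq_iff)

lemma trA_zero: "trA g (\<lambda>_. 0) = (\<lambda>_ _. 0)"
  by (simp add: trA_def sym2_def contr_eq_sum fun_eq_iff)

definition tneg :: "tensor \<Rightarrow> tensor" where
  "tneg x = (\<lambda>w. - x w)"

lemma tneg_tneg [simp]: "tneg (tneg x) = x"
  by (simp add: tneg_def)

lemma tmul_tneg_left: "tmul (tneg x) y = tneg (tmul x y)"
  by (simp add: tmul_def tneg_def fun_eq_iff sum_negf)

lemma tmul_tneg_right: "tmul x (tneg y) = tneg (tmul x y)"
  by (simp add: tmul_def tneg_def fun_eq_iff sum_negf)

lemma lie_commute: "lie y x = tneg (lie x y)"
  by (simp add: lie_def tsub_def tneg_def fun_eq_iff)

lemma lie_tneg_left: "lie (tneg x) y = tneg (lie x y)"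
  unfolding lie_def tmul_tneg_left tmul_tneg_right by (simp add: tsub_def tneg_def fun_eq_iff)

lemma lie_tneg_right: "lie x (tneg y) = tneg (lie x y)"
  unfolding lie_def tmul_tneg_left tmul_tneg_right by (simp add: tsub_def tneg_def fun_eq_iff)

lemma T4_swap_last: "T4 a b d c = tneg (T4 a b c d)"
proof -
  have dc: "lie (gen d) (gen c) = tneg (lie (gen c) (gen d))"
    and cab: "lie (gen c) (lie (gen a) (gen b)) = tneg (lie (lie (gen a) (gen b)) (gen c))"
    and abd: "lie (lie (gen a) (gen b)) (gen d) = tneg (lie (gen d) (lie (gen a) (gen b)))"
    by (rule lie_commute)+
  show ?thesis
    unfolding T4_def dc cab abd lie_tneg_left lie_tneg_right tmul_tneg_right
    by (simp add: tadd_def tneg_def fun_eq_iff)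
qed

lemma T4_last_eq: "T4 a b c c = (\<lambda>_. 0)"
  using T4_swap_last[of a b c c] by (simp add: tneg_def fun_eq_iff)

lemma zspan_base: "x \<in> S \<Longrightarrow> x \<in> zspan S"
  using zspan.add[OF _ zspan.zero, of x S] by (simp add: tadd_def)

lemma zspan_tadd:
  assumes "x \<in> zspan S" and "y \<in> zspan S"
  shows "tadd x y \<in> zspan S"
  using assms(2)
proof (induction y rule: zspan.induct)
  case zero
  from assms(1) show ?case by (simp add: tadd_def)
next
  case (add s y)
  have "tadd x (tadd y s) = tadd (tadd x y) s" by (simp add: tadd_def fun_eq_iff)
  with add assms(1) show ?case by (simp add: zspan.add)
next
  case (sub s y)
  have "tadd x (tsub y s) = tsub (tadd x y) s" by (simp add: tadd_def tsub_def fun_eq_iff)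
  with sub assms(1) show ?case by (simp add: zspan.sub)
qed

lemma zspan_tsub:
  assumes "x \<in> zspan S" and "y \<in> zspan S"
  shows "tsub x y \<in> zspan S"
  using assms(2)
proof (induction y rule: zspan.induct)
  case zero
  from assms(1) show ?case by (simp add: tsub_def)
next
  case (add s y)
  have "tsub x (tadd y s) = tsub (tsub x y) s" by (simp add: tadd_def tsub_def fun_eq_iff)
  with add assms(1) show ?case by (simp add: zspan.sub)
next
  case (sub s y)
  have "tsub x (tsub y s) = tadd (tsub x y) s" by (simp add: tadd_def tsub_def fun_eq_iff)
  with sub assms(1) show ?case by (simp add: zspan.add)
qed

lemma zspan_tneg: "x \<in> zspan S \<Longrightarrow> tneg x \<in> zspan S"
  using zspan_tsub[OF zspan.zero, of x S] by (simp add: tsub_def tneg_def)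

lemma zspan_least:
  assumes "(\<lambda>_. 0) \<in> U"
    and "\<And>x y. x \<in> U \<Longrightarrow> y \<in> U \<Longrightarrow> tadd x y \<in> U"
    and "\<And>x y. x \<in> U \<Longrightarrow> y \<in> U \<Longrightarrow> tsub x y \<in> U"
    and "S \<subseteq> U"
  shows "zspan S \<subseteq> U"
proof
  fix x assume "x \<in> zspan S"
  then show "x \<in> U" by induction (use assms in auto)
qed

abbreviation T4_cyc :: "nat \<Rightarrow> nat \<Rightarrow> nat \<Rightarrow> tensor" where
  "T4_cyc i j k \<equiv> T4 (La i) (Lb j) (Lb k) (Lb i)"

text \<open>basis_lift m n (m \<le> n) is a generator of W with trace b_m'b_n'; on the diagonal its
  a-index must differ from m, and other_index m is such an index in {1..g} once g \<ge> 2.\<close>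

definition other_index :: "nat \<Rightarrow> nat" where
  "other_index m = (if m = 1 then 2 else 1)"

definition basis_lift :: "nat \<Rightarrow> nat \<Rightarrow> tensor" where
  "basis_lift m n = (if m = n then T4_cyc (other_index m) m m else T4_cyc m m n)"

definition trA_lift :: "nat \<Rightarrow> tensor \<Rightarrow> tensor" where
  "trA_lift g x = (\<lambda>w. \<Sum>m\<in>{1..g}. \<Sum>n\<in>{m..g}. trA g x m n * basis_lift m n w)"

lemma sym2_unit2_le:
  assumes "m \<le> n"
  shows "sym2 (unit2 p q) m n = (if m = min p q \<and> n = max p q then 1 else 0)"
  using assms by (auto simp: sym2_def unit2_def min_def max_def)

lemma sum_sym2_unit2:
  assumes "p \<in> {1..g}" "q \<in> {1..g}"
  shows "(\<Sum>m\<in>{1..g}. \<Sum>n\<in>{m..g}. sym2 (unit2 p q) m n * f m n) = (f (min p q) (max p q) :: int)"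
proof -
  have "(\<Sum>m\<in>{1..g}. \<Sum>n\<in>{m..g}. sym2 (unit2 p q) m n * f m n)
      = (\<Sum>m\<in>{1..g}. \<Sum>n\<in>{m..g}. if m = min p q \<and> n = max p q then f m n else 0)"
    by (intro sum.cong refl) (simp add: sym2_unit2_le)
  also have "\<dots> = (\<Sum>m\<in>{1..g}. if m = min p q then f (min p q) (max p q) else 0)"
    using assms by (intro sum.cong refl) (auto simp: sum.delta')
  also have "\<dots> = f (min p q) (max p q)"
    using assms by (simp add: sum.delta' min_def)
  finally show ?thesis .
qed

lemma trA_lift_T4:
  assumes "i \<in> {1..g}" "j \<in> {1..g}" "k \<in> {1..g}" "l \<in> {1..g}"
  shows "trA_lift g (T4 (La i) (Lb j) (Lb k) (Lb l)) =
    (\<lambda>w. (if i = l then basis_lift (min k j) (max k j) w else 0)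
       - (if i = k then basis_lift (min l j) (max l j) w else 0))"
proof (intro ext)
  fix w
  have "trA_lift g (T4 (La i) (Lb j) (Lb k) (Lb l)) w =
      (\<Sum>m\<in>{1..g}. \<Sum>n\<in>{m..g}. (if i = l then sym2 (unit2 k j) m n * basis_lift m n w else 0)
        - (if i = k then sym2 (unit2 l j) m n * basis_lift m n w else 0))"
    unfolding trA_lift_def trA_T4[OF assms(1)] by (intro sum.cong refl) auto
  also have "\<dots> = (if i = l then basis_lift (min k j) (max k j) w else 0)
       - (if i = k then basis_lift (min l j) (max l j) w else 0)"
    using sum_sym2_unit2[OF assms(3,2)] sum_sym2_unit2[OF assms(4,2)]
    by (cases "i = l"; cases "i = k") (simp_all add: sum_subtractf sum_negf)
  finally show "trA_lift g (T4 (La i) (Lb j) (Lb k) (Lb l)) w = \<dots>" .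
qed

lemma trA_lift_tadd: "trA_lift g (tadd x y) = tadd (trA_lift g x) (trA_lift g y)"
  unfolding trA_lift_def trA_tadd by (simp add: tadd_def fun_eq_iff sum.distrib distrib_right)

lemma trA_lift_tsub: "trA_lift g (tsub x y) = tsub (trA_lift g x) (trA_lift g y)"
  unfolding trA_lift_def trA_tsub by (simp add: tsub_def fun_eq_iff sum_subtractf left_diff_distrib)

lemma trA_lift_eq_zero: "trA g x = (\<lambda>_ _. 0) \<Longrightarrow> trA_lift g x = (\<lambda>_. 0)"
  by (simp add: trA_lift_def fun_eq_iff)

definition kernel_gens :: "nat \<Rightarrow> tensor set" where
  "kernel_gens g =
      {T4 (La i) (Lb j) (Lb k) (Lb l) | i j k l.
         i \<in> {1..g} \<and> j \<in> {1..g} \<and> k \<in> {1..g} \<and> l \<in> {1..g} \<and>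
         i \<noteq> j \<and> i \<noteq> k \<and> i \<noteq> l}
    \<union> {T4 (La i) (Lb i) (Lb k) (Lb l) | i k l.
         i \<in> {1..g} \<and> k \<in> {1..g} \<and> l \<in> {1..g} \<and> i \<noteq> k \<and> i \<noteq> l}
    \<union> {tsub (T4_cyc i j j) (T4_cyc i' j j) | i i' j.
         i \<in> {1..g} \<and> i' \<in> {1..g} \<and> j \<in> {1..g} \<and> i \<noteq> j \<and> i' \<noteq> j}
    \<union> {tsub (T4_cyc i j k) (T4_cyc i' j k) | i i' j k.
         i \<in> {1..g} \<and> i' \<in> {1..g} \<and> j \<in> {1..g} \<and> k \<in> {1..g} \<and>
         i \<notin> {j, k} \<and> i' \<notin> {j, k} \<and> j \<noteq> k}
    \<union> {tsub (T4_cyc i j k) (T4_cyc i' k j) | i i' j k.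
         i \<in> {1..g} \<and> i' \<in> {1..g} \<and> j \<in> {1..g} \<and> k \<in> {1..g} \<and>
         i \<notin> {j, k} \<and> i' \<notin> {j, k} \<and> j \<noteq> k}
    \<union> {tsub (T4_cyc i j k) (T4_cyc j j k) | i j k.
         i \<in> {1..g} \<and> j \<in> {1..g} \<and> k \<in> {1..g} \<and> i \<notin> {j, k} \<and> j \<noteq> k}
    \<union> {tsub (T4_cyc i j k) (T4_cyc k k j) | i j k.
         i \<in> {1..g} \<and> j \<in> {1..g} \<and> k \<in> {1..g} \<and> i \<notin> {j, k} \<and> j \<noteq> k}
    \<union> {tsub (T4_cyc i i k) (T4_cyc k k i) | i k.
         i \<in> {1..g} \<and> k \<in> {1..g} \<and> i \<noteq> k}"

lemma T4_in_kernel_gens: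
  "\<lbrakk>i \<in> {1..g}; j \<in> {1..g}; k \<in> {1..g}; l \<in> {1..g}; i \<noteq> j; i \<noteq> k; i \<noteq> l\<rbrakk>
    \<Longrightarrow> T4 (La i) (Lb j) (Lb k) (Lb l) \<in> kernel_gens g"
  unfolding kernel_gens_def by (rule UnI1, rule UnI1, rule UnI1, rule UnI1, rule UnI1, rule UnI1, rule UnI1) blast

lemma T4_diag_in_kernel_gens:
  "\<lbrakk>i \<in> {1..g}; k \<in> {1..g}; l \<in> {1..g}; i \<noteq> k; i \<noteq> l\<rbrakk>
    \<Longrightarrow> T4 (La i) (Lb i) (Lb k) (Lb l) \<in> kernel_gens g"
  unfolding kernel_gens_def by (rule UnI1, rule UnI1, rule UnI1, rule UnI1, rule UnI1, rule UnI1, rule UnI2) blast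

lemma T4_cyc_repeat_diff_in_kernel_gens:
  "\<lbrakk>i \<in> {1..g}; i' \<in> {1..g}; j \<in> {1..g}; i \<noteq> j; i' \<noteq> j\<rbrakk>
    \<Longrightarrow> tsub (T4_cyc i j j) (T4_cyc i' j j) \<in> kernel_gens g"
  unfolding kernel_gens_def by (rule UnI1, rule UnI1, rule UnI1, rule UnI1, rule UnI1, rule UnI2) blast

lemma T4_cyc_diff_left_in_kernel_gens:
  "\<lbrakk>i \<in> {1..g}; j \<in> {1..g}; k \<in> {1..g}; i \<notin> {j, k}; j \<noteq> k\<rbrakk>
    \<Longrightarrow> tsub (T4_cyc i j k) (T4_cyc j j k) \<in> kernel_gens g"
  unfolding kernel_gens_def by (rule UnI1, rule UnI1, rule UnI2) blast

lemma T4_cyc_diff_right_in_kernel_gens: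
  "\<lbrakk>i \<in> {1..g}; j \<in> {1..g}; k \<in> {1..g}; i \<notin> {j, k}; j \<noteq> k\<rbrakk>
    \<Longrightarrow> tsub (T4_cyc i j k) (T4_cyc k k j) \<in> kernel_gens g"
  unfolding kernel_gens_def by (rule UnI1, rule UnI2) blast

lemma T4_cyc_diag_diff_in_kernel_gens:
  "\<lbrakk>i \<in> {1..g}; k \<in> {1..g}; i \<noteq> k\<rbrakk> \<Longrightarrow> tsub (T4_cyc i i k) (T4_cyc k k i) \<in> kernel_gens g"
  unfolding kernel_gens_def by (rule UnI2) blast

lemma trA_kernel_gens: "x \<in> kernel_gens g \<Longrightarrow> trA g x = (\<lambda>_ _. 0)"
  unfolding kernel_gens_def
  by (elim UnE CollectE exE conjE; simp only: trA_tsub trA_T4; simp add: fun_eq_iff sym2_unit2_commute)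

lemma kernel_gens_subset_W: "kernel_gens g \<subseteq> W g"
proof -
  have gen: "T4 (La i) (Lb j) (Lb k) (Lb l) \<in> W g"
    if "i \<in> {1..g}" "j \<in> {1..g}" "k \<in> {1..g}" "l \<in> {1..g}" for i j k l
    unfolding W_def by (rule zspan_base) (use that in blast)
  have "tsub x y \<in> W g" if "x \<in> W g" "y \<in> W g" for x y
    using that unfolding W_def by (rule zspan_tsub)
  with gen show ?thesis
    unfolding kernel_gens_def by (auto simp del: atLeastAtMost_iff)
qed

lemma T4_cyc_minus_basis_lift_in_zspan:
  assumes g: "g \<ge> 2" and ijk: "i \<in> {1..g}" "j \<in> {1..g}" "k \<in> {1..g}" and "i \<noteq> k"
  shows "tsub (T4_cyc i j k) (basis_lift (min j k) (max j k)) \<in> zspan (kernel_gens g)"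
proof -
  have other: "other_index j \<in> {1..g}" "other_index j \<noteq> j"
    using g by (auto simp: other_index_def)
  consider "j = i" "i < k" | "j = i" "k < i" | "j \<noteq> i" "j = k" | "j \<noteq> i" "j \<noteq> k" "j < k"
    | "j \<noteq> i" "j \<noteq> k" "k < j"
    using \<open>i \<noteq> k\<close> by linarith
  then show ?thesis
  proof cases
    case 1
    then have "tsub (T4_cyc i j k) (basis_lift (min j k) (max j k)) = (\<lambda>_. 0)"
      by (simp add: basis_lift_def tsub_def)
    then show ?thesis by (simp add: zspan.zero)
  next
    case 2
    then have "tsub (T4_cyc i i k) (T4_cyc k k i) \<in> kernel_gens g"
      using ijk by (intro T4_cyc_diag_diff_in_kernel_gens) auto
    with 2 show ?thesis by (simp add: basis_lift_def zspan_base)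
  next
    case 3
    then have "tsub (T4_cyc i j j) (T4_cyc (other_index j) j j) \<in> kernel_gens g"
      using ijk other by (intro T4_cyc_repeat_diff_in_kernel_gens) auto
    with 3 show ?thesis by (simp add: basis_lift_def zspan_base)
  next
    case 4
    then have "tsub (T4_cyc i j k) (T4_cyc j j k) \<in> kernel_gens g"
      using ijk \<open>i \<noteq> k\<close> by (intro T4_cyc_diff_left_in_kernel_gens) auto
    with 4 show ?thesis by (simp add: basis_lift_def zspan_base)
  next
    case 5
    then have "tsub (T4_cyc i j k) (T4_cyc k k j) \<in> kernel_gens g"
      using ijk \<open>i \<noteq> k\<close> by (intro T4_cyc_diff_right_in_kernel_gens) auto
    with 5 show ?thesis by (simp add: basis_lift_def zspan_base min_def max_def)
  qed
qed

lemma T4_minus_trA_lift_in_zspan: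
  assumes g: "g \<ge> 2" and ijkl: "i \<in> {1..g}" "j \<in> {1..g}" "k \<in> {1..g}" "l \<in> {1..g}"
  shows "tsub (T4 (La i) (Lb j) (Lb k) (Lb l)) (trA_lift g (T4 (La i) (Lb j) (Lb k) (Lb l)))
    \<in> zspan (kernel_gens g)"
proof -
  note lift = trA_lift_T4[OF ijkl]
  consider "i \<noteq> k" "i \<noteq> l" | "i \<noteq> k" "i = l" | "i = k" "i \<noteq> l" | "i = k" "i = l"
    by blast
  then show ?thesis
  proof cases
    case 1
    then have "T4 (La i) (Lb j) (Lb k) (Lb l) \<in> kernel_gens g"
      using ijkl by (cases "i = j") (auto intro: T4_in_kernel_gens T4_diag_in_kernel_gens)
    with 1 show ?thesis by (simp add: lift tsub_def zspan_base)
  next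
    case 2
    show ?thesis
      unfolding lift using 2 T4_cyc_minus_basis_lift_in_zspan[OF g ijkl(1-3)]
      by (simp add: min.commute max.commute tsub_def)
  next
    case 3
    have swap: "T4 (La i) (Lb j) (Lb k) (Lb l) = tneg (T4_cyc i j l)"
      using 3 T4_swap_last[of "La i" "Lb j" "Lb l" "Lb i"] by simp
    have "tneg (tsub (T4_cyc i j l) (basis_lift (min j l) (max j l))) \<in> zspan (kernel_gens g)"
      using 3 T4_cyc_minus_basis_lift_in_zspan[OF g ijkl(1,2,4)] by (intro zspan_tneg) simp
    then show ?thesis
      unfolding lift unfolding swap using 3 by (simp add: min.commute max.commute tsub_def tneg_def)
  next
    case 4
    show ?thesis
      unfolding lift using 4 by (simp add: T4_last_eq tsub_def zspan.zero)
  qed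
qed

lemma W_minus_trA_lift_in_zspan:
  assumes "g \<ge> 2" and "x \<in> W g"
  shows "tsub x (trA_lift g x) \<in> zspan (kernel_gens g)"
proof -
  let ?U = "{x. tsub x (trA_lift g x) \<in> zspan (kernel_gens g)}"
  have "zspan {T4 (La i) (Lb j) (Lb k) (Lb l) | i j k l.
      i \<in> {1..g} \<and> j \<in> {1..g} \<and> k \<in> {1..g} \<and> l \<in> {1..g}} \<subseteq> ?U"
  proof (rule zspan_least)
    show "(\<lambda>_. 0) \<in> ?U"
      by (simp add: trA_lift_eq_zero trA_zero tsub_def zspan.zero)
  next
    fix x y assume "x \<in> ?U" "y \<in> ?U"
    moreover have "tsub (tadd x y) (trA_lift g (tadd x y))
        = tadd (tsub x (trA_lift g x)) (tsub y (trA_lift g y))"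
      and "tsub (tsub x y) (trA_lift g (tsub x y))
        = tsub (tsub x (trA_lift g x)) (tsub y (trA_lift g y))"
      unfolding trA_lift_tadd trA_lift_tsub by (simp_all add: tadd_def tsub_def fun_eq_iff)
    ultimately show "tadd x y \<in> ?U" and "tsub x y \<in> ?U"
      by (simp_all add: zspan_tadd zspan_tsub)
  qed (use T4_minus_trA_lift_in_zspan[OF assms(1)] in blast)
  with assms(2) show ?thesis unfolding W_def by blast
qed

lemma zspan_kernel_gens_subset: "zspan (kernel_gens g) \<subseteq> {x \<in> W g. trA g x = (\<lambda>_ _. 0)}"
proof (rule zspan_least)
  show "(\<lambda>_. 0) \<in> {x \<in> W g. trA g x = (\<lambda>_ _. 0)}"
    by (simp add: W_def zspan.zero trA_zero)
next
  fix x y assume "x \<in> {x \<in> W g. trA g x = (\<lambda>_ _. 0)}" "y \<in> {x \<in> W g. trA g x = (\<lambda>_ _. 0)}"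
  then show "tadd x y \<in> {x \<in> W g. trA g x = (\<lambda>_ _. 0)}"
    and "tsub x y \<in> {x \<in> W g. trA g x = (\<lambda>_ _. 0)}"
    by (simp_all add: W_def zspan_tadd zspan_tsub trA_tadd trA_tsub)
qed (use kernel_gens_subset_W trA_kernel_gens in blast)

theorem proposition5p4:
  fixes g :: nat
  assumes "g \<ge> 2"
  shows "{x \<in> W g. trA g x = (\<lambda>_ _. 0)} =
    zspan (
      {T4 (La i) (Lb j) (Lb k) (Lb l) | i j k l.
         i \<in> {1..g} \<and> j \<in> {1..g} \<and> k \<in> {1..g} \<and> l \<in> {1..g} \<and>
         i \<noteq> j \<and> i \<noteq> k \<and> i \<noteq> l}
    \<union> {T4 (La i) (Lb i) (Lb k) (Lb l) | i k l.
         i \<in> {1..g} \<and> k \<in> {1..g} \<and> l \<in> {1..g} \<and> i \<noteq> k \<and> i \<noteq> l}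
    \<union> {tsub (T4 (La i) (Lb j) (Lb j) (Lb i)) (T4 (La i') (Lb j) (Lb j) (Lb i')) | i i' j.
         i \<in> {1..g} \<and> i' \<in> {1..g} \<and> j \<in> {1..g} \<and> i \<noteq> j \<and> i' \<noteq> j}
    \<union> {tsub (T4 (La i) (Lb j) (Lb k) (Lb i)) (T4 (La i') (Lb j) (Lb k) (Lb i')) | i i' j k.
         i \<in> {1..g} \<and> i' \<in> {1..g} \<and> j \<in> {1..g} \<and> k \<in> {1..g} \<and>
         i \<notin> {j, k} \<and> i' \<notin> {j, k} \<and> j \<noteq> k}
    \<union> {tsub (T4 (La i) (Lb j) (Lb k) (Lb i)) (T4 (La i') (Lb k) (Lb j) (Lb i')) | i i' j k.
         i \<in> {1..g} \<and> i' \<in> {1..g} \<and> j \<in> {1..g} \<and> k \<in> {1..g} \<and>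
         i \<notin> {j, k} \<and> i' \<notin> {j, k} \<and> j \<noteq> k}
    \<union> {tsub (T4 (La i) (Lb j) (Lb k) (Lb i)) (T4 (La j) (Lb j) (Lb k) (Lb j)) | i j k.
         i \<in> {1..g} \<and> j \<in> {1..g} \<and> k \<in> {1..g} \<and> i \<notin> {j, k} \<and> j \<noteq> k}
    \<union> {tsub (T4 (La i) (Lb j) (Lb k) (Lb i)) (T4 (La k) (Lb k) (Lb j) (Lb k)) | i j k.
         i \<in> {1..g} \<and> j \<in> {1..g} \<and> k \<in> {1..g} \<and> i \<notin> {j, k} \<and> j \<noteq> k}
    \<union> {tsub (T4 (La i) (Lb i) (Lb k) (Lb i)) (T4 (La k) (Lb k) (Lb i) (Lb k)) | i k.
         i \<in> {1..g} \<and> k \<in> {1..g} \<and> i \<noteq> k})"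
proof -
  have "{x \<in> W g. trA g x = (\<lambda>_ _. 0)} = zspan (kernel_gens g)"
  proof
    show "{x \<in> W g. trA g x = (\<lambda>_ _. 0)} \<subseteq> zspan (kernel_gens g)"
    proof
      fix x assume "x \<in> {x \<in> W g. trA g x = (\<lambda>_ _. 0)}"
      then have "x \<in> W g" and "trA_lift g x = (\<lambda>_. 0)"
        by (auto intro: trA_lift_eq_zero)
      then have "x = tsub x (trA_lift g x)"
        by (simp add: tsub_def)
      also have "\<dots> \<in> zspan (kernel_gens g)"
        using W_minus_trA_lift_in_zspan[OF assms \<open>x \<in> W g\<close>] .
      finally show "x \<in> zspan (kernel_gens g)" .
    qed
  qed (rule zspan_kernel_gens_subset)
  then show ?thesis unfolding kernel_gens_def .
qed

end
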